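(* For a discrete memoryless channel $\mathcal W$ from a finite set $\mathcal X$ to a finite set $\mathcal Y$, $\lim_{r\to0^+}E_{\rm sp}(r,\mathcal W)=U(\mathcal W)$.
   Context: $D(P\|Q)=\sum_xP(x)\log\frac{P(x)}{Q(x)}$ ($0\log(0/q)=0$; $+\infty$ if $P\not\ll Q$); for $\alpha\in(0,1)$, $D_\alpha(P\|Q)=\frac1{\alpha-1}\log\sum_xP(x)^\alpha Q(x)^{1-\alpha}$. For $P_X\in\mathcal P(\mathcal X)$, $P_{XY}(x,y)=P_X(x)\mathcal W(y|x)$. For $r>0$, $E_{\rm sp}(r,\mathcal W)=\sup_{\alpha\in(0,1]}\max_{P_X}\min_{Q_Y}\frac{1-\alpha}{\alpha}\big(D_\alpha(P_{XY}\|P_X\times Q_Y)-r\big)$ (the $\alpha=1$ term being $0$). $U(\mathcal W)=\max_{P_X}\min_{Q_Y}D(P_X\times Q_Y\|P_{XY})$. *)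

theory Defs
  imports Complex_Main "HOL-Library.Extended_Real"
begin

definition is_distr :: "('a::finite \<Rightarrow> real) \<Rightarrow> bool" where
  "is_distr P \<longleftrightarrow> (\<forall>a. 0 \<le> P a) \<and> (\<Sum>a\<in>UNIV. P a) = 1"

text \<open>A DMC: W x y = W(y|x), each row a distribution on the output alphabet.\<close>
definition is_channel :: "('x::finite \<Rightarrow> 'y::finite \<Rightarrow> real) \<Rightarrow> bool" where
  "is_channel W \<longleftrightarrow> (\<forall>x. is_distr (W x))"

definition kl_div :: "('a::finite \<Rightarrow> real) \<Rightarrow> ('a \<Rightarrow> real) \<Rightarrow> ereal" where
  "kl_div P Q =
     (if (\<forall>a. P a \<noteq> 0 \<longrightarrow> Q a \<noteq> 0)
      then ereal (\<Sum>a\<in>UNIV. if P a = 0 then 0 else P a * ln (P a / Q a))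
      else \<infinity>)"

text \<open>Renyi divergence of order alpha in (0,1); log 0 = -infinity gives +infinity.\<close>
definition renyi_div :: "real \<Rightarrow> ('a::finite \<Rightarrow> real) \<Rightarrow> ('a \<Rightarrow> real) \<Rightarrow> ereal" where
  "renyi_div \<alpha> P Q =
     (let s = (\<Sum>a\<in>UNIV. P a powr \<alpha> * Q a powr (1 - \<alpha>))
      in if s = 0 then \<infinity> else ereal (ln s / (\<alpha> - 1)))"

definition joint_distr :: "('x \<Rightarrow> real) \<Rightarrow> ('x \<Rightarrow> 'y \<Rightarrow> real) \<Rightarrow> ('x \<times> 'y \<Rightarrow> real)" where
  "joint_distr P W = (\<lambda>(x, y). P x * W x y)"

definition prod_distr :: "('x \<Rightarrow> real) \<Rightarrow> ('y \<Rightarrow> real) \<Rightarrow> ('x \<times> 'y \<Rightarrow> real)" where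
  "prod_distr P Q = (\<lambda>(x, y). P x * Q y)"

definition E_sp :: "real \<Rightarrow> ('x::finite \<Rightarrow> 'y::finite \<Rightarrow> real) \<Rightarrow> ereal" where
  "E_sp r W =
     (SUP \<alpha>\<in>{0<..1}. SUP P\<in>{P. is_distr P}. INF Q\<in>{Q. is_distr Q}.
        (if \<alpha> = 1 then 0
         else ereal ((1 - \<alpha>) / \<alpha>) *
                (renyi_div \<alpha> (joint_distr P W) (prod_distr P Q) - ereal r)))"

definition U_chan :: "('x::finite \<Rightarrow> 'y::finite \<Rightarrow> real) \<Rightarrow> ereal" where
  "U_chan W =
     (SUP P\<in>{P. is_distr P}. INF Q\<in>{Q. is_distr Q}.
        kl_div (prod_distr P Q) (joint_distr P W))"

end

theory Submission
  imports Defs "HOL-Analysis.Analysis"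
begin

text \<open>
  For \<open>r \<ge> 0\<close> every term of \<open>E_sp\<close> is at most \<open>D(P \<times> Q \<parallel> P\<^sub>X\<^sub>Y)\<close>: the skew symmetry
  \<open>(1-\<alpha>)/\<alpha> \<cdot> D\<^sub>\<alpha>(P\<^sub>X\<^sub>Y \<parallel> P \<times> Q) = D\<^sub>1\<^sub>-\<^sub>\<alpha>(P \<times> Q \<parallel> P\<^sub>X\<^sub>Y)\<close> turns it into a Renyi divergence of
  order below 1, and these are dominated by the KL divergence (Jensen for \<open>exp\<close>). Hoelder's inequality bounds the Renyi sum uniformly in \<open>Q\<close>, giving
  \<open>E_sp r W \<ge> - ln S(\<alpha>) - r (1-\<alpha>)/\<alpha>\<close> with \<open>S(\<alpha>) = \<Sum>\<^sub>y (\<Sum>\<^sub>x P x W(y|x)\<^sup>\<alpha>)\<^sup>1\<^sup>/\<^sup>\<alpha>\<close>.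
  As \<open>\<alpha> \<rightarrow> 0\<close> these power means tend to the geometric means \<open>G y = exp (\<Sum>\<^sub>x P x ln W(y|x))\<close>,
  and the output distribution proportional to \<open>G\<close> has \<open>D(P \<times> Q \<parallel> P\<^sub>X\<^sub>Y) = - ln (\<Sum>\<^sub>y G y)\<close>.
  So choosing first \<open>\<alpha>\<close> and then \<open>r\<close> small brings \<open>E_sp r W\<close> above any value below
  \<open>min\<^sub>Q D(P \<times> Q \<parallel> P\<^sub>X\<^sub>Y)\<close>, for every \<open>P\<close>.
\<close>

lemma sum_UNIV_prod:
  fixes f :: "'a::finite \<times> 'b::finite \<Rightarrow> 'c::comm_monoid_add"
  shows "(\<Sum>z\<in>UNIV. f z) = (\<Sum>x\<in>UNIV. \<Sum>y\<in>UNIV. f (x, y))"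
  by (simp add: sum.cartesian_product flip: UNIV_Times_UNIV)

lemma is_distr_nonneg: "is_distr P \<Longrightarrow> 0 \<le> P x"
  by (simp add: is_distr_def)

lemma is_distr_sum: "is_distr P \<Longrightarrow> (\<Sum>x\<in>UNIV. P x) = 1"
  by (simp add: is_distr_def)

lemma is_channel_nonneg: "is_channel W \<Longrightarrow> 0 \<le> W x y"
  by (simp add: is_channel_def is_distr_def)

lemma is_distr_uniform: "is_distr (\<lambda>_::'a::finite. 1 / real CARD('a))"
  by (simp add: is_distr_def)

lemma is_distr_ex_pos:
  assumes "is_distr P"
  obtains x where "0 < P x"
proof -
  have "\<not> (\<forall>x. P x \<le> 0)"
    using sum_nonpos[of UNIV P] is_distr_sum[OF assms] by auto
  then show ?thesis
    using that by (meson not_le)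
qed

lemma joint_distr_apply [simp]: "joint_distr P W (x, y) = P x * W x y"
  by (simp add: joint_distr_def)

lemma prod_distr_apply [simp]: "prod_distr P Q (x, y) = P x * Q y"
  by (simp add: prod_distr_def)

lemma is_distr_joint_distr: "is_distr P \<Longrightarrow> is_channel W \<Longrightarrow> is_distr (joint_distr P W)"
  unfolding is_distr_def
  by (auto simp: sum_UNIV_prod is_channel_def is_distr_def simp flip: sum_distrib_left)

lemma is_distr_prod_distr: "is_distr P \<Longrightarrow> is_distr Q \<Longrightarrow> is_distr (prod_distr P Q)"
  unfolding is_distr_def by (auto simp: sum_UNIV_prod simp flip: sum_distrib_left)

lemma Youngs_inequality_nonneg:
  fixes q b t :: real
  assumes "0 \<le> q" "0 \<le> b" "0 < t" "t < 1"
  shows "q powr (1 - t) * b powr t \<le> (1 - t) * q + t * b"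
  using Youngs_inequality_0[of "1 - t" t q b] assms
  by (cases "q = 0 \<or> b = 0") auto

lemma exp_neg_kl_div_le:
  fixes a b :: "'a::finite \<Rightarrow> real"
  assumes b: "is_distr b" and a: "\<And>z. 0 \<le> a z" and D: "kl_div b a = ereal D"
    and t: "0 < t" "t \<le> 1"
  shows "exp (- t * D) \<le> (\<Sum>z\<in>UNIV. b z powr (1 - t) * a z powr t)"
proof -
  have ac: "b z \<noteq> 0 \<Longrightarrow> 0 < a z" for z
    using D a[of z] by (auto simp: kl_div_def less_le split: if_splits)
  have D_eq: "D = (\<Sum>z\<in>UNIV. if b z = 0 then 0 else b z * ln (b z / a z))"
    using D by (auto simp: kl_div_def split: if_splits)
  define y where "y z = t * ln (a z / b z)" for z
  have "- t * D = (\<Sum>z\<in>UNIV. b z * y z)"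
    unfolding D_eq y_def sum_distrib_left
    by (intro sum.cong refl) (use ac is_distr_nonneg[OF b] in \<open>auto simp: ln_div less_le algebra_simps\<close>)
  then have "exp (- t * D) \<le> (\<Sum>z\<in>UNIV. b z * exp (y z))"
    using convex_on_sum[OF _ _ exp_convex, of UNIV b y] b by (auto simp: is_distr_def)
  also have "\<dots> = (\<Sum>z\<in>UNIV. b z powr (1 - t) * a z powr t)"
  proof (intro sum.cong refl)
    fix z
    show "b z * exp (y z) = b z powr (1 - t) * a z powr t"
    proof (cases "b z = 0")
      case False
      then have "0 < b z" "0 < a z"
        using ac is_distr_nonneg[OF b, of z] by (auto simp: less_le)
      moreover have "exp (y z) = (a z / b z) powr t"
        using \<open>0 < a z\<close> \<open>0 < b z\<close> by (simp add: y_def powr_def mult.commute)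
      ultimately show ?thesis
        by (simp add: powr_divide powr_diff field_simps)
    qed simp
  qed
  finally show ?thesis .
qed

lemma kl_div_nonneg:
  assumes a: "is_distr a" and b: "is_distr b"
  shows "0 \<le> kl_div b a"
proof (cases "kl_div b a")
  case (real D)
  \<comment> \<open>\<open>b z powr 0\<close> is the indicator of \<open>b z \<noteq> 0\<close>, since \<open>0 powr 0 = 0\<close>\<close>
  have "exp (- D) \<le> (\<Sum>z\<in>UNIV. b z powr 0 * a z powr 1)"
    using exp_neg_kl_div_le[OF b is_distr_nonneg[OF a] real, of 1] by simp
  also have "\<dots> \<le> (\<Sum>z\<in>UNIV. a z)"
    by (intro sum_mono) (use is_distr_nonneg[OF a] in auto)
  finally have "exp (- D) \<le> 1"
    using is_distr_sum[OF a] by simp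
  then show ?thesis
    using real by simp
next
  case PInf
  then show ?thesis by simp
next
  case MInf
  then show ?thesis by (simp add: kl_div_def split: if_splits)
qed

lemma renyi_div_le_kl_div:
  assumes a: "is_distr a" and b: "is_distr b" and \<beta>: "0 < \<beta>" "\<beta> < 1"
  shows "renyi_div \<beta> b a \<le> kl_div b a"
proof (cases "kl_div b a")
  case (real D)
  define s where "s = (\<Sum>z\<in>UNIV. b z powr \<beta> * a z powr (1 - \<beta>))"
  have "exp (- (1 - \<beta>) * D) \<le> s"
    using exp_neg_kl_div_le[OF b is_distr_nonneg[OF a] real, of "1 - \<beta>"] \<beta> by (simp add: s_def)
  moreover from this have "0 < s"
    by (rule less_le_trans[OF exp_gt_zero])
  ultimately have "- (1 - \<beta>) * D \<le> ln s"
    by (simp add: ln_ge_iff)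
  then have "ln s / (\<beta> - 1) \<le> D"
    using \<beta> by (simp add: divide_le_eq algebra_simps)
  then show ?thesis
    using \<open>0 < s\<close> real by (simp add: renyi_div_def s_def)
qed (auto simp: kl_div_def split: if_splits)

lemma renyi_div_skew:
  assumes "0 < \<alpha>" "\<alpha> < 1"
  shows "ereal ((1 - \<alpha>) / \<alpha>) * renyi_div \<alpha> P Q = renyi_div (1 - \<alpha>) Q P"
proof -
  define s where "s = (\<Sum>a\<in>UNIV. P a powr \<alpha> * Q a powr (1 - \<alpha>))"
  have "renyi_div (1 - \<alpha>) Q P = (if s = 0 then \<infinity> else ereal (ln s / - \<alpha>))"
    by (simp add: renyi_div_def s_def mult.commute)
  moreover have "(1 - \<alpha>) / \<alpha> * (ln s / (\<alpha> - 1)) = ln s / - \<alpha>"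
    using assms by (simp add: field_simps)
  ultimately show ?thesis
    using assms by (simp add: renyi_div_def s_def[symmetric])
qed

definition sp_term :: "('x::finite \<Rightarrow> 'y::finite \<Rightarrow> real) \<Rightarrow> real \<Rightarrow> real \<Rightarrow> ('x \<Rightarrow> real) \<Rightarrow> ('y \<Rightarrow> real) \<Rightarrow> ereal" where
  "sp_term W r \<alpha> P Q =
     (if \<alpha> = 1 then 0
      else ereal ((1 - \<alpha>) / \<alpha>) * (renyi_div \<alpha> (joint_distr P W) (prod_distr P Q) - ereal r))"

lemma E_sp_eq_SUP_sp_term:
  "E_sp r W = (SUP \<alpha>\<in>{0<..1}. SUP P\<in>{P. is_distr P}. INF Q\<in>{Q. is_distr Q}. sp_term W r \<alpha> P Q)"
  unfolding E_sp_def sp_term_def ..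

lemma INF_sp_term_le_E_sp:
  assumes "\<alpha> \<in> {0<..1}" "is_distr P"
  shows "(INF Q\<in>{Q. is_distr Q}. sp_term W r \<alpha> P Q) \<le> E_sp r W"
  unfolding E_sp_eq_SUP_sp_term
  by (rule SUP_upper2[of \<alpha>], use assms in simp, rule SUP_upper2[of P], use assms in auto)

lemma E_sp_nonneg:
  fixes W :: "'x::finite \<Rightarrow> 'y::finite \<Rightarrow> real"
  shows "0 \<le> E_sp r W"
proof -
  have "(INF Q\<in>{Q. is_distr Q}. sp_term W r 1 (\<lambda>_. 1 / real CARD('x)) Q) = 0"
    using is_distr_uniform by (auto simp: sp_term_def intro!: INF_const)
  then show ?thesis
    using INF_sp_term_le_E_sp[OF _ is_distr_uniform, of 1 W r] by simp
qed

lemma sp_term_le_kl_div: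
  assumes P: "is_distr P" and Q: "is_distr Q" and W: "is_channel W"
    and \<alpha>: "\<alpha> \<in> {0<..1}" and r: "0 \<le> r"
  shows "sp_term W r \<alpha> P Q \<le> kl_div (prod_distr P Q) (joint_distr P W)"
proof (cases "\<alpha> = 1")
  case True
  then show ?thesis
    using kl_div_nonneg[OF is_distr_joint_distr[OF P W] is_distr_prod_distr[OF P Q]]
    by (simp add: sp_term_def)
next
  case False
  then have \<alpha>: "0 < \<alpha>" "\<alpha> < 1"
    using \<alpha> by auto
  define R where "R = renyi_div \<alpha> (joint_distr P W) (prod_distr P Q)"
  have "R - ereal r \<le> R"
    using r by (cases R) auto
  then have "sp_term W r \<alpha> P Q \<le> ereal ((1 - \<alpha>) / \<alpha>) * R"
    using \<alpha> by (auto simp: sp_term_def R_def intro!: ereal_mult_left_mono)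
  also have "\<dots> = renyi_div (1 - \<alpha>) (prod_distr P Q) (joint_distr P W)"
    unfolding R_def by (rule renyi_div_skew[OF \<alpha>])
  also have "\<dots> \<le> kl_div (prod_distr P Q) (joint_distr P W)"
    using \<alpha> by (intro renyi_div_le_kl_div is_distr_joint_distr is_distr_prod_distr P Q W) auto
  finally show ?thesis .
qed

lemma E_sp_le_U_chan:
  fixes W :: "'x::finite \<Rightarrow> 'y::finite \<Rightarrow> real"
  assumes W: "is_channel W" and r: "0 \<le> r"
  shows "E_sp r W \<le> U_chan W"
  unfolding E_sp_eq_SUP_sp_term
proof (intro SUP_least)
  fix \<alpha> :: real and P :: "'x \<Rightarrow> real"
  assume \<alpha>: "\<alpha> \<in> {0<..1}" and P: "P \<in> {P. is_distr P}"
  have "(INF Q\<in>{Q. is_distr Q}. sp_term W r \<alpha> P Q)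
      \<le> (INF Q\<in>{Q. is_distr Q}. kl_div (prod_distr P Q) (joint_distr P W))"
    using sp_term_le_kl_div[OF _ _ W \<alpha> r] P by (intro INF_mono) blast
  also have "\<dots> \<le> U_chan W"
    unfolding U_chan_def using P by (rule SUP_upper)
  finally show "(INF Q\<in>{Q. is_distr Q}. sp_term W r \<alpha> P Q) \<le> U_chan W" .
qed

definition power_mean :: "real \<Rightarrow> ('a::finite \<Rightarrow> real) \<Rightarrow> ('a \<Rightarrow> real) \<Rightarrow> real" where
  "power_mean t P w = (\<Sum>x\<in>UNIV. P x * w x powr t) powr (1 / t)"

lemma power_mean_nonneg: "0 \<le> power_mean t P w"
  by (simp add: power_mean_def)

lemma power_mean_powr:
  assumes "is_distr P" "\<And>x. 0 \<le> w x" "0 < t"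
  shows "power_mean t P w powr t = (\<Sum>x\<in>UNIV. P x * w x powr t)"
proof -
  have "0 \<le> (\<Sum>x\<in>UNIV. P x * w x powr t)"
    using assms by (intro sum_nonneg mult_nonneg_nonneg) (auto simp: is_distr_nonneg)
  then show ?thesis
    using assms(3) by (simp add: power_mean_def powr_powr)
qed

lemma sum_powr_mult_le_powr_sum:
  fixes Q B :: "'a::finite \<Rightarrow> real"
  assumes Q: "is_distr Q" and B: "\<And>y. 0 \<le> B y" and t: "0 < t" "t < 1"
  shows "(\<Sum>y\<in>UNIV. Q y powr (1 - t) * B y powr t) \<le> (\<Sum>y\<in>UNIV. B y) powr t"
proof (cases "(\<Sum>y\<in>UNIV. B y) = 0")
  case True
  then have "B y = 0" for y
    using B sum_nonneg_eq_0_iff[of UNIV B] by auto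
  then show ?thesis by simp
next
  case False
  define S where "S = (\<Sum>y\<in>UNIV. B y)"
  have S: "0 < S"
    using False B sum_nonneg[of UNIV B] by (auto simp: S_def less_le)
  have "(\<Sum>y\<in>UNIV. Q y powr (1 - t) * B y powr t)
      = S powr t * (\<Sum>y\<in>UNIV. Q y powr (1 - t) * (B y / S) powr t)"
    using S B by (simp add: sum_distrib_left powr_divide)
  also have "\<dots> \<le> S powr t * (\<Sum>y\<in>UNIV. (1 - t) * Q y + t * (B y / S))"
    using Q B S t by (intro mult_left_mono sum_mono Youngs_inequality_nonneg) (auto simp: is_distr_nonneg)
  also have "\<dots> = S powr t"
    using S t is_distr_sum[OF Q]
    by (simp add: sum.distrib sum_divide_distrib[symmetric] S_def flip: sum_distrib_left)
  finally show ?thesis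
    unfolding S_def .
qed

lemma renyi_sum_joint_prod:
  assumes P: "is_distr P" and Q: "is_distr Q" and W: "is_channel W" and t: "0 < t" "t < 1"
  shows "(\<Sum>z\<in>UNIV. joint_distr P W z powr t * prod_distr P Q z powr (1 - t))
       = (\<Sum>y\<in>UNIV. Q y powr (1 - t) * power_mean t P (\<lambda>x. W x y) powr t)"
proof -
  have "(P x * W x y) powr t * (P x * Q y) powr (1 - t) = Q y powr (1 - t) * (P x * W x y powr t)"
    for x y
  proof (cases "P x = 0")
    case False
    then have "P x powr t * P x powr (1 - t) = P x"
      using is_distr_nonneg[OF P, of x] by (simp flip: powr_add)
    then show ?thesis
      using P Q W by (simp add: powr_mult is_distr_nonneg is_channel_nonneg algebra_simps)
  qed simp
  then have "(\<Sum>z\<in>UNIV. joint_distr P W z powr t * prod_distr P Q z powr (1 - t))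
      = (\<Sum>x\<in>UNIV. \<Sum>y\<in>UNIV. Q y powr (1 - t) * (P x * W x y powr t))"
    by (simp add: sum_UNIV_prod)
  also have "\<dots> = (\<Sum>y\<in>UNIV. Q y powr (1 - t) * (\<Sum>x\<in>UNIV. P x * W x y powr t))"
    by (subst sum.swap) (simp add: sum_distrib_left)
  finally show ?thesis
    using P W t by (simp add: power_mean_powr is_channel_nonneg)
qed

definition geometric_mean :: "('a::finite \<Rightarrow> real) \<Rightarrow> ('a \<Rightarrow> real) \<Rightarrow> real" where
  "geometric_mean P w =
     (if \<forall>x. 0 < P x \<longrightarrow> 0 < w x then exp (\<Sum>x\<in>UNIV. P x * ln (w x)) else 0)"

lemma geometric_mean_nonneg: "0 \<le> geometric_mean P w"
  by (simp add: geometric_mean_def)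

lemma power_mean_tendsto_geometric_mean_pos:
  assumes P: "is_distr P" and w: "\<forall>x. 0 < P x \<longrightarrow> 0 < w x"
  shows "((\<lambda>t. power_mean t P w) \<longlongrightarrow> geometric_mean P w) (at_right 0)"
proof -
  define h where "h t = (\<Sum>x\<in>UNIV. P x * exp (t * ln (w x)))" for t
  define L where "L = (\<Sum>x\<in>UNIV. P x * ln (w x))"
  obtain x0 where "0 < P x0"
    using is_distr_ex_pos[OF P] .
  then have h_pos: "0 < h t" for t
    unfolding h_def by (intro sum_pos2[of _ x0]) (auto simp: is_distr_nonneg[OF P])
  have "(\<Sum>x\<in>UNIV. P x * w x powr t) = h t" for t
    unfolding h_def
    by (intro sum.cong refl) (use w is_distr_nonneg[OF P] in \<open>auto simp: powr_def less_le\<close>)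
  then have power_mean_eq: "power_mean t P w = exp (ln (h t) / t)" for t
    using h_pos[of t] by (simp add: power_mean_def powr_def)
  have h0: "h 0 = 1"
    using is_distr_sum[OF P] by (simp add: h_def)
  have "(h has_field_derivative (\<Sum>x\<in>UNIV. P x * (exp (0 * ln (w x)) * ln (w x)))) (at 0)"
    unfolding h_def by (intro derivative_eq_intros) auto
  then have h_deriv: "(h has_field_derivative L) (at 0)"
    by (simp add: L_def)
  have "((\<lambda>t. ln (h t)) has_field_derivative (1 / h 0 * L)) (at 0)"
    by (rule DERIV_chain2[OF DERIV_ln_divide h_deriv]) (use h_pos in auto)
  then have "((\<lambda>t. ln (h t) / t) \<longlongrightarrow> L) (at 0)"
    using h0 by (simp add: has_field_derivative_iff)
  then have "((\<lambda>t. ln (h t) / t) \<longlongrightarrow> L) (at_right 0)"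
    by (rule tendsto_mono[OF at_within_le_at])
  then have "((\<lambda>t. exp (ln (h t) / t)) \<longlongrightarrow> exp L) (at_right 0)"
    by (rule tendsto_exp)
  then show ?thesis
    using w by (simp add: power_mean_eq geometric_mean_def L_def)
qed

lemma powr_inverse_tendsto_zero:
  fixes q :: real
  assumes "0 < q" "q < 1"
  shows "((\<lambda>t. q powr (1 / t)) \<longlongrightarrow> 0) (at_right 0)"
proof -
  have "filterlim (\<lambda>t. ln q * inverse t) at_bot (at_right 0)"
    using assms
    by (intro filterlim_tendsto_neg_mult_at_bot[OF tendsto_const _ filterlim_inverse_at_top_right]) simp
  then have "((\<lambda>t. exp (ln q * inverse t)) \<longlongrightarrow> 0) (at_right 0)"
    by (rule filterlim_compose[OF exp_at_bot])
  then show ?thesis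
    using assms by (simp add: powr_def divide_inverse mult.commute)
qed

text \<open>As \<open>w x0 = 0\<close>, the mass \<open>P x0\<close> is missing from the inner sum, which therefore stays
  below some \<open>q < 1\<close> near \<open>t = 0\<close>.\<close>

lemma power_mean_tendsto_zero:
  assumes P: "is_distr P" and w: "\<And>x. 0 \<le> w x" and x0: "0 < P x0" "w x0 = 0"
  shows "((\<lambda>t. power_mean t P w) \<longlongrightarrow> 0) (at_right 0)"
proof -
  define f where "f t = (\<Sum>x\<in>UNIV. P x * (if w x = 0 then 0 else exp (t * ln (w x))))" for t
  have power_mean_eq: "power_mean t P w = f t powr (1 / t)" for t
    by (simp add: power_mean_def f_def powr_def)
  have f_nonneg: "0 \<le> f t" for t
    unfolding f_def by (intro sum_nonneg mult_nonneg_nonneg) (auto simp: is_distr_nonneg[OF P])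
  have "f 0 \<le> (\<Sum>x\<in>UNIV. P x - (if x = x0 then P x0 else 0))"
    unfolding f_def by (intro sum_mono) (use x0 is_distr_nonneg[OF P] in auto)
  also have "\<dots> = 1 - P x0"
    using is_distr_sum[OF P] by (simp add: sum_subtractf)
  finally have "f 0 < 1"
    using x0 by simp
  define q where "q = (1 + f 0) / 2"
  have q: "f 0 < q" "0 < q" "q < 1"
    using \<open>f 0 < 1\<close> f_nonneg[of 0] by (auto simp: q_def)
  have "isCont (\<lambda>t. if w x = 0 then 0 else exp (t * ln (w x))) 0" for x
    by (cases "w x = 0") (auto intro!: continuous_intros)
  then have "isCont f 0"
    unfolding f_def by (intro continuous_intros)
  then have "\<forall>\<^sub>F t in at 0. f t < q"
    using q(1) unfolding isCont_def by (rule order_tendstoD)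
  then have "\<forall>\<^sub>F t in at_right 0. f t < q \<and> 0 < t"
    by (auto simp: eventually_at_filter elim: eventually_mono)
  then have "\<forall>\<^sub>F t in at_right 0. power_mean t P w \<le> q powr (1 / t)"
    by (rule eventually_mono) (auto simp: power_mean_eq intro!: powr_mono2 f_nonneg)
  then show ?thesis
    by (intro tendsto_sandwich[OF _ _ tendsto_const powr_inverse_tendsto_zero[OF q(2,3)]])
       (auto simp: power_mean_nonneg)
qed

lemma power_mean_tendsto_geometric_mean:
  assumes P: "is_distr P" and w: "\<And>x. 0 \<le> w x"
  shows "((\<lambda>t. power_mean t P w) \<longlongrightarrow> geometric_mean P w) (at_right 0)"
proof (cases "\<forall>x. 0 < P x \<longrightarrow> 0 < w x")
  case True
  then show ?thesis
    using power_mean_tendsto_geometric_mean_pos[OF P] by blast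
next
  case False
  then obtain x0 where x0: "0 < P x0" "w x0 = 0"
    using w by (auto simp: less_le)
  have "geometric_mean P w = 0"
    using False by (simp add: geometric_mean_def)
  then show ?thesis
    using power_mean_tendsto_zero[where P = P and w = w, OF P w x0] by simp
qed

lemma renyi_sum_joint_prod_le:
  assumes P: "is_distr P" and Q: "is_distr Q" and W: "is_channel W" and t: "0 < t" "t < 1"
  shows "(\<Sum>z\<in>UNIV. joint_distr P W z powr t * prod_distr P Q z powr (1 - t))
       \<le> (\<Sum>y\<in>UNIV. power_mean t P (\<lambda>x. W x y)) powr t"
  unfolding renyi_sum_joint_prod[OF assms]
  by (rule sum_powr_mult_le_powr_sum[OF Q power_mean_nonneg t])

lemma sp_term_ge_power_mean:
  assumes P: "is_distr P" and Q: "is_distr Q" and W: "is_channel W" and \<alpha>: "0 < \<alpha>" "\<alpha> < 1"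
    and S: "0 < (\<Sum>y\<in>UNIV. power_mean \<alpha> P (\<lambda>x. W x y))" (is "0 < ?S")
  shows "ereal (- ln ?S - r * (1 - \<alpha>) / \<alpha>) \<le> sp_term W r \<alpha> P Q"
proof -
  define s where "s = (\<Sum>z\<in>UNIV. joint_distr P W z powr \<alpha> * prod_distr P Q z powr (1 - \<alpha>))"
  have s_nonneg: "0 \<le> s"
    unfolding s_def by (intro sum_nonneg) simp
  show ?thesis
  proof (cases "s = 0")
    case True
    then show ?thesis
      using \<alpha> by (simp add: sp_term_def renyi_div_def s_def[symmetric])
  next
    case False
    then have "0 < s"
      using s_nonneg by simp
    moreover have "s \<le> ?S powr \<alpha>"
      using renyi_sum_joint_prod_le[OF P Q W \<alpha>] by (simp add: s_def)
    ultimately have "ln s \<le> ln (?S powr \<alpha>)"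
      by (subst ln_le_cancel_iff) (use S in auto)
    then have "- ln ?S \<le> - ln s / \<alpha>"
      using S \<alpha> by (simp add: ln_powr field_simps)
    moreover have "(1 - \<alpha>) / \<alpha> * (ln s / (\<alpha> - 1) - r) = - ln s / \<alpha> - r * (1 - \<alpha>) / \<alpha>"
      using \<alpha> by (simp add: field_simps)
    ultimately show ?thesis
      using False \<alpha> by (simp add: sp_term_def renyi_div_def s_def[symmetric])
  qed
qed

lemma sp_term_eq_infinity:
  assumes P: "is_distr P" and Q: "is_distr Q" and W: "is_channel W" and \<alpha>: "0 < \<alpha>" "\<alpha> < 1"
    and S: "(\<Sum>y\<in>UNIV. power_mean \<alpha> P (\<lambda>x. W x y)) = 0"
  shows "sp_term W r \<alpha> P Q = \<infinity>"
proof -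
  have "(\<Sum>z\<in>UNIV. joint_distr P W z powr \<alpha> * prod_distr P Q z powr (1 - \<alpha>)) = 0"
    using renyi_sum_joint_prod_le[OF P Q W \<alpha>] S by (simp add: order_antisym sum_nonneg)
  then show ?thesis
    using \<alpha> by (simp add: sp_term_def renyi_div_def)
qed

lemma eventually_E_sp_greater_power_mean:
  assumes P: "is_distr P" and W: "is_channel W" and \<alpha>: "0 < \<alpha>" "\<alpha> < 1"
    and S: "(\<Sum>y\<in>UNIV. power_mean \<alpha> P (\<lambda>x. W x y)) < exp (- c)" (is "?S < _")
  shows "\<forall>\<^sub>F r in at_right 0. ereal c < E_sp r W"
proof (cases "?S = 0")
  case True
  have "\<infinity> \<le> (INF Q\<in>{Q. is_distr Q}. sp_term W r \<alpha> P Q)" for r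
    using sp_term_eq_infinity[OF P _ W \<alpha> True] by (intro INF_greatest) simp
  then have "E_sp r W = \<infinity>" for r
    using INF_sp_term_le_E_sp[of \<alpha> P W r] \<alpha> P by (simp add: top_unique)
  then show ?thesis
    by simp
next
  case False
  then have "0 < ?S"
    by (simp add: less_le sum_nonneg power_mean_nonneg)
  then have "ln ?S < ln (exp (- c))"
    using S by (subst ln_less_cancel_iff) auto
  then have "c < - ln ?S"
    by simp
  define \<delta> where "\<delta> = (- ln ?S - c) * \<alpha> / (1 - \<alpha>)"
  have "0 < \<delta>"
    using \<open>c < - ln ?S\<close> \<alpha> by (simp add: \<delta>_def)
  then have "\<forall>\<^sub>F r in at_right 0. r < \<delta>"
    by (auto simp: eventually_at_right_field)
  then show ?thesis
  proof (rule eventually_mono)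
    fix r
    assume "r < \<delta>"
    then have "ereal c < ereal (- ln ?S - r * (1 - \<alpha>) / \<alpha>)"
      using \<alpha> by (simp add: \<delta>_def field_simps)
    also have "\<dots> \<le> (INF Q\<in>{Q. is_distr Q}. sp_term W r \<alpha> P Q)"
      using sp_term_ge_power_mean[OF P _ W \<alpha> \<open>0 < ?S\<close>] by (intro INF_greatest) auto
    also have "\<dots> \<le> E_sp r W"
      using INF_sp_term_le_E_sp[of \<alpha> P W r] \<alpha> P by simp
    finally show "ereal c < E_sp r W" .
  qed
qed

lemma kl_div_prod_joint_optimal:
  assumes P: "is_distr P" and W: "is_channel W"
  defines "T \<equiv> \<Sum>y\<in>UNIV. geometric_mean P (\<lambda>x. W x y)"
  defines "Q \<equiv> \<lambda>y. geometric_mean P (\<lambda>x. W x y) / T"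
  assumes T: "0 < T"
  shows "is_distr Q" and "kl_div (prod_distr P Q) (joint_distr P W) = ereal (- ln T)"
proof -
  show Q: "is_distr Q"
    using T by (simp add: is_distr_def Q_def T_def geometric_mean_nonneg flip: sum_divide_distrib)
  have support: "0 < W x y" if "0 < P x" "Q y \<noteq> 0" for x y
    using that by (auto simp: Q_def geometric_mean_def split: if_splits)
  have "P x * Q y * ln (P x * Q y / (P x * W x y)) = P x * Q y * (- ln T)
          + Q y * (P x * ln (geometric_mean P (\<lambda>x. W x y)) - P x * ln (W x y))"
    if "P x * Q y \<noteq> 0" for x y
  proof -
    have "0 < P x" "0 < Q y"
      using that is_distr_nonneg[OF P, of x] is_distr_nonneg[OF Q, of y] by (auto simp: less_le)
    moreover from this have "0 < W x y" "0 < geometric_mean P (\<lambda>x. W x y)"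
      using support T by (auto simp: Q_def zero_less_divide_iff)
    ultimately show ?thesis
      using T by (simp add: Q_def ln_div ln_mult algebra_simps add_divide_distrib)
  qed
  then have "(\<Sum>z\<in>UNIV. if prod_distr P Q z = 0 then 0
               else prod_distr P Q z * ln (prod_distr P Q z / joint_distr P W z))
      = (\<Sum>y\<in>UNIV. \<Sum>x\<in>UNIV. P x * Q y * (- ln T)
          + Q y * (P x * ln (geometric_mean P (\<lambda>x. W x y)) - P x * ln (W x y)))"
    by (subst sum_UNIV_prod, subst sum.swap) (intro sum.cong refl, auto)
  also have "\<dots> = (\<Sum>y\<in>UNIV. Q y * (- ln T))"
  proof (intro sum.cong refl)
    fix y
    have "(\<Sum>x\<in>UNIV. P x * ln (geometric_mean P (\<lambda>x. W x y))) = (\<Sum>x\<in>UNIV. P x * ln (W x y))"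
      if "Q y \<noteq> 0"
      using support[OF _ that] is_distr_sum[OF P]
      by (auto simp: geometric_mean_def simp flip: sum_distrib_right)
    then show "(\<Sum>x\<in>UNIV. P x * Q y * (- ln T)
          + Q y * (P x * ln (geometric_mean P (\<lambda>x. W x y)) - P x * ln (W x y))) = Q y * (- ln T)"
      using is_distr_sum[OF P]
      by (cases "Q y = 0") (auto simp: sum.distrib sum_subtractf
          simp flip: sum_distrib_left sum_distrib_right)
  qed
  also have "\<dots> = - ln T"
    using is_distr_sum[OF Q] by (simp add: sum_negf flip: sum_distrib_right)
  finally show "kl_div (prod_distr P Q) (joint_distr P W) = ereal (- ln T)"
    using support is_distr_nonneg[OF P]
    by (subst kl_div_def) (auto simp: less_le)
qed

lemma sum_geometric_mean_less:
  assumes P: "is_distr P" and W: "is_channel W"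
    and c: "ereal c < (INF Q\<in>{Q. is_distr Q}. kl_div (prod_distr P Q) (joint_distr P W))"
  shows "(\<Sum>y\<in>UNIV. geometric_mean P (\<lambda>x. W x y)) < exp (- c)" (is "?T < _")
proof (cases "?T = 0")
  case False
  then have "0 < ?T"
    by (simp add: less_le sum_nonneg geometric_mean_nonneg)
  with kl_div_prod_joint_optimal[OF P W this] c have "ereal c < ereal (- ln ?T)"
    by (metis (mono_tags) INF_lower mem_Collect_eq order_less_le_trans)
  then have "ln ?T < - c"
    by simp
  then show ?thesis
    using \<open>0 < ?T\<close> by (metis exp_less_mono exp_ln)
qed simp

lemma eventually_E_sp_greater:
  assumes P: "is_distr P" and W: "is_channel W"
    and c: "ereal c < (INF Q\<in>{Q. is_distr Q}. kl_div (prod_distr P Q) (joint_distr P W))"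
  shows "\<forall>\<^sub>F r in at_right 0. ereal c < E_sp r W"
proof -
  have "((\<lambda>\<alpha>. \<Sum>y\<in>UNIV. power_mean \<alpha> P (\<lambda>x. W x y))
      \<longlongrightarrow> (\<Sum>y\<in>UNIV. geometric_mean P (\<lambda>x. W x y))) (at_right 0)"
    using P W by (intro tendsto_sum power_mean_tendsto_geometric_mean is_channel_nonneg)
  then have "\<forall>\<^sub>F \<alpha> in at_right 0. (\<Sum>y\<in>UNIV. power_mean \<alpha> P (\<lambda>x. W x y)) < exp (- c)"
    using sum_geometric_mean_less[OF P W c] by (rule order_tendstoD)
  moreover have "\<forall>\<^sub>F \<alpha> in at_right (0::real). 0 < \<alpha> \<and> \<alpha> < 1"
    by (auto simp: eventually_at_right_field intro!: exI[of _ 1])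
  ultimately obtain \<alpha> where "0 < \<alpha>" "\<alpha> < 1"
    and "(\<Sum>y\<in>UNIV. power_mean \<alpha> P (\<lambda>x. W x y)) < exp (- c)"
    using eventually_happens'[OF trivial_limit_at_right_real] eventually_conj by blast
  then show ?thesis
    by (rule eventually_E_sp_greater_power_mean[OF P W])
qed

theorem mainTheorem5:
  fixes W :: "'x::finite \<Rightarrow> 'y::finite \<Rightarrow> real"
  assumes "is_channel W"
  shows "((\<lambda>r. E_sp r W) \<longlongrightarrow> U_chan W) (at_right 0)"
proof (rule order_tendstoI)
  fix c
  assume c: "U_chan W < c"
  show "\<forall>\<^sub>F r in at_right 0. E_sp r W < c"
    using eventually_at_right_less[of "0::real"]
    by (rule eventually_mono) (use E_sp_le_U_chan[OF assms] c in \<open>meson le_less_trans less_imp_le\<close>)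
next
  fix c
  assume c: "c < U_chan W"
  show "\<forall>\<^sub>F r in at_right 0. c < E_sp r W"
  proof (cases c)
    case (real c')
    then obtain P where "is_distr P"
      and "ereal c' < (INF Q\<in>{Q. is_distr Q}. kl_div (prod_distr P Q) (joint_distr P W))"
      using c by (auto simp: U_chan_def less_SUP_iff)
    then show ?thesis
      using eventually_E_sp_greater[OF _ assms] real by blast
  next
    case MInf
    then show ?thesis
      using E_sp_nonneg[of _ W] by (simp add: ereal_less_le)
  qed (use c in simp)
qed

end
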